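(* Let $L,k$ be natural numbers and let $G=(V,E)$ be a simple, undirected, connected graph whose vertex set can be covered by $L$ balls of radius $k$ (i.e. there are $u_1,\dots,u_L\in V$ with every vertex at distance at most $k$ from some $u_j$). Then the cat can localise the mouse up to distance $4L+k$ in $G$ by time $2L$.
   Context: The Cat and Mouse game on $G$ proceeds in time steps $i=1,2,\dots$. The mouse occupies vertices $m_1,m_2,\dots$, where for $i\ge2$, $m_i$ equals $m_{i-1}$ or is a neighbour of $m_{i-1}$. At time $i$ the cat tests an arbitrary vertex $c_i$; for $i\ge2$ it is told $b_i=1$ if $d(c_i,m_i)\le d(c_{i-1},m_{i-1})$ and $b_i=0$ otherwise ($d$ = graph distance). A cat strategy is $(c_1,c_2,f)$ with $f:\bigcup_{i\in\mathbb N}\{0,1\}^i\to V(G)$ and $c_i=f(b_2,\dots,b_{i-1})$ for $i\ge3$ (deterministic, fixed in advance). $M_i$ is the set of vertices $v$ for which there exist $\tilde m_1,\dots,\tilde m_i$ with $\tilde m_i=v$, each $\tilde m_j$ in the closed neighbourhood of $\tilde m_{j-1}$, and for each $2\le j\le i$: $d(c_j,\tilde m_j)\le d(c_{j-1},\tilde m_{j-1})$ iff $b_j=1$. $\mathrm{rad}_G(W)=\min_{v\in V(G)}\max_{w\in W}d(v,w)$. The cat can localise the mouse up to distance $d$ by time $t$ if there is a cat strategy such that, for every admissible mouse sequence, some $i\le t$ satisfies $\mathrm{rad}_G(M_i)\le d$. *)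

theory Defs
  imports Main "HOL-Library.Extended_Nat"
begin

definition simple_graph :: "'a set \<Rightarrow> ('a \<Rightarrow> 'a \<Rightarrow> bool) \<Rightarrow> bool" where
  "simple_graph V E \<longleftrightarrow>
     (\<forall>x y. E x y \<longrightarrow> x \<in> V \<and> y \<in> V) \<and>
     (\<forall>x y. E x y \<longrightarrow> E y x) \<and>
     (\<forall>x. \<not> E x x)"

inductive walk :: "('a \<Rightarrow> 'a \<Rightarrow> bool) \<Rightarrow> nat \<Rightarrow> 'a \<Rightarrow> 'a \<Rightarrow> bool" for E where
  walk_refl: "walk E 0 u u"
| walk_step: "E u w \<Longrightarrow> walk E n w v \<Longrightarrow> walk E (Suc n) u v"

definition connected_graph :: "'a set \<Rightarrow> ('a \<Rightarrow> 'a \<Rightarrow> bool) \<Rightarrow> bool" where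
  "connected_graph V E \<longleftrightarrow> V \<noteq> {} \<and> (\<forall>u\<in>V. \<forall>v\<in>V. \<exists>n. walk E n u v)"

text \<open>Graph distance (meaningful in a connected graph).\<close>
definition gdist :: "('a \<Rightarrow> 'a \<Rightarrow> bool) \<Rightarrow> 'a \<Rightarrow> 'a \<Rightarrow> nat" where
  "gdist E u v = (LEAST n. walk E n u v)"

text \<open>rad_G(W) = min over v in V of max over w in W of d(v,w) (as inf/sup in enat,
so that it is well defined also for infinite W).\<close>
definition grad :: "'a set \<Rightarrow> ('a \<Rightarrow> 'a \<Rightarrow> bool) \<Rightarrow> 'a set \<Rightarrow> enat" where
  "grad V E W = (INF v\<in>V. SUP w\<in>W. enat (gdist E v w))"

text \<open>Admissible mouse sequences m_1, m_2, ... (index 0 unused).\<close>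
definition mouse_seq :: "'a set \<Rightarrow> ('a \<Rightarrow> 'a \<Rightarrow> bool) \<Rightarrow> (nat \<Rightarrow> 'a) \<Rightarrow> bool" where
  "mouse_seq V E m \<longleftrightarrow>
     (\<forall>i\<ge>1. m i \<in> V) \<and> (\<forall>i\<ge>2. m i = m (i - 1) \<or> E (m (i - 1)) (m i))"

text \<open>Cat position at time i, given the answers b_2,...,b_{i-1} received so far.\<close>
definition cat_pos :: "'a \<Rightarrow> 'a \<Rightarrow> (bool list \<Rightarrow> 'a) \<Rightarrow> nat \<Rightarrow> bool list \<Rightarrow> 'a" where
  "cat_pos c1 c2 f i h = (if i \<le> 1 then c1 else if i = 2 then c2 else f h)"

text \<open>hist n = [b_2, ..., b_n] (empty for n \<le> 1), for the strategy (c1,c2,f) played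
against the mouse sequence m.\<close>
fun hist :: "('a \<Rightarrow> 'a \<Rightarrow> bool) \<Rightarrow> 'a \<Rightarrow> 'a \<Rightarrow> (bool list \<Rightarrow> 'a) \<Rightarrow> (nat \<Rightarrow> 'a) \<Rightarrow> nat \<Rightarrow> bool list" where
  "hist E c1 c2 f m 0 = []"
| "hist E c1 c2 f m (Suc 0) = []"
| "hist E c1 c2 f m (Suc (Suc k)) =
     hist E c1 c2 f m (Suc k) @
       [gdist E (cat_pos c1 c2 f (Suc (Suc k)) (hist E c1 c2 f m (Suc k))) (m (Suc (Suc k)))
        \<le> gdist E (cat_pos c1 c2 f (Suc k) (hist E c1 c2 f m k)) (m (Suc k))]"

definition cat :: "('a \<Rightarrow> 'a \<Rightarrow> bool) \<Rightarrow> 'a \<Rightarrow> 'a \<Rightarrow> (bool list \<Rightarrow> 'a) \<Rightarrow> (nat \<Rightarrow> 'a) \<Rightarrow> nat \<Rightarrow> 'a" where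
  "cat E c1 c2 f m i = cat_pos c1 c2 f i (hist E c1 c2 f m (i - 1))"

definition answer :: "('a \<Rightarrow> 'a \<Rightarrow> bool) \<Rightarrow> 'a \<Rightarrow> 'a \<Rightarrow> (bool list \<Rightarrow> 'a) \<Rightarrow> (nat \<Rightarrow> 'a) \<Rightarrow> nat \<Rightarrow> bool" where
  "answer E c1 c2 f m i =
     (gdist E (cat E c1 c2 f m i) (m i) \<le> gdist E (cat E c1 c2 f m (i - 1)) (m (i - 1)))"

text \<open>M_i: the set of possible mouse positions at time i consistent with the answers.\<close>
definition possible_set :: "'a set \<Rightarrow> ('a \<Rightarrow> 'a \<Rightarrow> bool) \<Rightarrow> 'a \<Rightarrow> 'a \<Rightarrow> (bool list \<Rightarrow> 'a)
    \<Rightarrow> (nat \<Rightarrow> 'a) \<Rightarrow> nat \<Rightarrow> 'a set" where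
  "possible_set V E c1 c2 f m i =
     {v. \<exists>mt :: nat \<Rightarrow> 'a. mt i = v \<and> (\<forall>j\<in>{1..i}. mt j \<in> V) \<and>
        (\<forall>j\<in>{2..i}. mt j = mt (j - 1) \<or> E (mt (j - 1)) (mt j)) \<and>
        (\<forall>j\<in>{2..i}. (gdist E (cat E c1 c2 f m j) (mt j)
                        \<le> gdist E (cat E c1 c2 f m (j - 1)) (mt (j - 1)))
                     \<longleftrightarrow> answer E c1 c2 f m j)}"

definition can_localise :: "'a set \<Rightarrow> ('a \<Rightarrow> 'a \<Rightarrow> bool) \<Rightarrow> nat \<Rightarrow> nat \<Rightarrow> bool" where
  "can_localise V E d t \<longleftrightarrow>
     (\<exists>c1 c2 f. c1 \<in> V \<and> c2 \<in> V \<and> (\<forall>h. f h \<in> V) \<and>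
        (\<forall>m. mouse_seq V E m \<longrightarrow>
           (\<exists>i\<in>{1..t}. grad V E (possible_set V E c1 c2 f m i) \<le> enat d)))"

end

(*
  The cat tests the centres u_1, ..., u_L at the even times 2, 4, ..., and at each odd time
  2j+1 it re-tests whichever of its two previous vertices c_{2j-1}, c_{2j} was reported to be
  at the smaller distance from the mouse.  As the mouse moves at speed at most 1, the
  distance D_t = d(c_t, m_t) then satisfies D_{2j+1} <= D_{2j-1} + 2 and D_{2j+1} <= D_{2j} + 1,
  so once the centre u_i within distance k of the mouse's start has been tested, D is at most
  k + 2j at the odd times 2j+1.  The same bound holds for every trajectory producing the same
  answers, hence all of M_{2L-1} lies within k + 2L - 2 <= 4L + k of c_{2L-1}.
*)

theory Submission
  imports Defs
begin

lemma walk_snoc: "walk E n x y \<Longrightarrow> E y z \<Longrightarrow> walk E (Suc n) x z"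
  by (induction rule: walk.induct) (auto intro: walk.intros)

lemma gdist_le_Suc:
  assumes "walk E n x y" and "E y z"
  shows "gdist E x z \<le> Suc (gdist E x y)"
proof -
  have "walk E (gdist E x y) x y"
    unfolding gdist_def using assms(1) by (rule LeastI)
  then have "walk E (Suc (gdist E x y)) x z"
    using assms(2) by (rule walk_snoc)
  then show ?thesis
    unfolding gdist_def by (rule Least_le)
qed

lemma gdist_move_le:
  assumes "connected_graph V E" and "x \<in> V" and "y \<in> V" and "z = y \<or> E y z"
  shows "gdist E x z \<le> gdist E x y + 1"
  using assms gdist_le_Suc[of E _ x y z] by (auto simp: connected_graph_def)

lemma grad_le:
  assumes "x \<in> V" and "\<And>w. w \<in> W \<Longrightarrow> gdist E x w \<le> r"
  shows "grad V E W \<le> enat r"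
proof -
  have "grad V E W \<le> (SUP w\<in>W. enat (gdist E x w))"
    unfolding grad_def using assms(1) by (rule INF_lower)
  also have "\<dots> \<le> enat r"
    using assms(2) by (intro SUP_least) simp
  finally show ?thesis .
qed

lemma length_hist: "length (hist E c1 c2 f m n) = n - 1"
  by (induction E c1 c2 f m n rule: hist.induct) auto

lemma nth_hist:
  assumes "2 \<le> j" and "j \<le> n"
  shows "hist E c1 c2 f m n ! (j - 2) = answer E c1 c2 f m j"
  using assms
proof (induction E c1 c2 f m n rule: hist.induct)
  case (3 E c1 c2 f m k)
  show ?case
  proof (cases "j = Suc (Suc k)")
    case True
    then show ?thesis
      by (simp add: nth_append length_hist answer_def cat_def)
  next
    case False
    then have "j - 2 < k" using 3 by simp
    then show ?thesis
      using 3 by (simp add: nth_append length_hist)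
  qed
qed auto

lemma cat_causal_strategy:
  fixes P :: "(nat \<Rightarrow> bool) \<Rightarrow> nat \<Rightarrow> 'a"
  assumes causal: "\<And>b b' i. (\<And>j. 2 \<le> j \<Longrightarrow> j < i \<Longrightarrow> b j = b' j) \<Longrightarrow> P b i = P b' i"
    and "1 \<le> i"
  defines "c1 \<equiv> P (\<lambda>_. True) 1" and "c2 \<equiv> P (\<lambda>_. True) 2"
    and "f \<equiv> \<lambda>h. P (\<lambda>j. h ! (j - 2)) (length h + 2)"
  shows "cat E c1 c2 f m i = P (answer E c1 c2 f m) i"
proof (cases "i \<le> 2")
  case True
  have "P (\<lambda>_. True) i = P (answer E c1 c2 f m) i"
    using True by (intro causal) simp
  moreover have "i = 1 \<or> i = 2"
    using True \<open>1 \<le> i\<close> by auto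
  ultimately show ?thesis
    by (auto simp: cat_def cat_pos_def c1_def c2_def)
next
  case False
  let ?h = "hist E c1 c2 f m (i - 1)"
  have "length ?h + 2 = i"
    using False by (simp add: length_hist)
  then have "cat E c1 c2 f m i = P (\<lambda>j. ?h ! (j - 2)) i"
    using False by (simp add: cat_def cat_pos_def f_def)
  also have "\<dots> = P (answer E c1 c2 f m) i"
    by (rule causal) (simp add: nth_hist)
  finally show ?thesis .
qed

fun sweep_odd :: "(nat \<Rightarrow> 'a) \<Rightarrow> (nat \<Rightarrow> bool) \<Rightarrow> nat \<Rightarrow> 'a" where
  "sweep_odd u b 0 = u 1"
| "sweep_odd u b (Suc j) = (if b (2 * j + 2) then u (j + 2) else sweep_odd u b j)"

definition sweep :: "(nat \<Rightarrow> 'a) \<Rightarrow> (nat \<Rightarrow> bool) \<Rightarrow> nat \<Rightarrow> 'a" where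
  "sweep u b i = (if even i then u (i div 2 + 1) else sweep_odd u b (i div 2))"

lemma sweep_even [simp]: "sweep u b (2 * j) = u (j + 1)"
  by (simp add: sweep_def)

lemma sweep_odd_Suc:
  "sweep u b (2 * j + 3) = (if b (2 * j + 2) then sweep u b (2 * j + 2) else sweep u b (2 * j + 1))"
proof -
  have "2 * j + 3 = 2 * Suc j + 1" "2 * j + 2 = 2 * (j + 1)" by simp_all
  then show ?thesis
    by (simp only:) (simp add: sweep_def)
qed

lemma sweep_in_range: "sweep u b i \<in> range u"
proof -
  have "sweep_odd u b j \<in> range u" for j
    by (induction j) auto
  then show ?thesis
    by (simp add: sweep_def)
qed

lemma sweep_causal:
  assumes "\<And>j. 2 \<le> j \<Longrightarrow> j < i \<Longrightarrow> b j = b' j"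
  shows "sweep u b i = sweep u b' i"
proof -
  have "sweep_odd u b j = sweep_odd u b' j" if "2 * j < i" for j
    using that by (induction j) (auto simp: assms)
  moreover have "odd i \<Longrightarrow> 2 * (i div 2) < i"
    by presburger
  ultimately show ?thesis
    by (simp add: sweep_def)
qed

locale sweep_trajectory =
  fixes d :: "'a \<Rightarrow> 'a \<Rightarrow> nat" and u :: "nat \<Rightarrow> 'a" and b :: "nat \<Rightarrow> bool"
    and mt :: "nat \<Rightarrow> 'a" and T :: nat
  assumes slow: "\<And>x t. x \<in> range u \<Longrightarrow> 2 \<le> t \<Longrightarrow> t \<le> T \<Longrightarrow> d x (mt t) \<le> d x (mt (t - 1)) + 1"
    and answers: "\<And>t. 2 \<le> t \<Longrightarrow> t \<le> T \<Longrightarrow>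
      b t \<longleftrightarrow> d (sweep u b t) (mt t) \<le> d (sweep u b (t - 1)) (mt (t - 1))"
begin

abbreviation D :: "nat \<Rightarrow> nat" where
  "D t \<equiv> d (sweep u b t) (mt t)"

lemma drift:
  assumes "x \<in> range u" and "1 \<le> s" and "s \<le> t" and "t \<le> T"
  shows "d x (mt t) \<le> d x (mt s) + (t - s)"
  using \<open>s \<le> t\<close> \<open>t \<le> T\<close>
proof (induction t rule: dec_induct)
  case (step t)
  then have "d x (mt (Suc t)) \<le> d x (mt t) + 1"
    using slow[of x "Suc t"] \<open>x \<in> range u\<close> \<open>1 \<le> s\<close> by simp
  with step show ?case
    by simp
qed simp

lemma odd_step:
  assumes "2 * j + 3 \<le> T"
  shows "D (2 * j + 3) \<le> D (2 * j + 1) + 2" and "D (2 * j + 3) \<le> D (2 * j + 2) + 1"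
proof -
  let ?x = "sweep u b (2 * j + 1)" and ?y = "sweep u b (2 * j + 2)"
  have x: "d ?x (mt (2 * j + 3)) \<le> D (2 * j + 1) + 2"
    using drift[OF sweep_in_range[of u b "2 * j + 1"], of "2 * j + 1" "2 * j + 3"] assms by simp
  have y: "d ?y (mt (2 * j + 3)) \<le> D (2 * j + 2) + 1"
    using drift[OF sweep_in_range[of u b "2 * j + 2"], of "2 * j + 2" "2 * j + 3"] assms by simp
  have "b (2 * j + 2) \<longleftrightarrow> D (2 * j + 2) \<le> D (2 * j + 1)"
    using answers[of "2 * j + 2"] assms by simp
  then show "D (2 * j + 3) \<le> D (2 * j + 1) + 2" and "D (2 * j + 3) \<le> D (2 * j + 2) + 1"
    using x y by (cases "b (2 * j + 2)"; simp add: sweep_odd_Suc)+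
qed

lemma tracks_centre:
  assumes "i \<le> j" and "2 * j + 1 \<le> T"
  shows "D (2 * j + 1) \<le> d (u (i + 1)) (mt 1) + 2 * j"
  using assms
proof (induction j)
  case (Suc j)
  have t: "2 * Suc j + 1 = 2 * j + 3"
    by simp
  show ?case
  proof (cases "i \<le> j")
    case True
    then show ?thesis
      using Suc odd_step(1)[of j] unfolding t by simp
  next
    case False
    then have "i = Suc j"
      using Suc.prems by simp
    then have "D (2 * j + 2) \<le> d (u (i + 1)) (mt 1) + (2 * j + 1)"
      using drift[of "u (j + 2)" 1 "2 * j + 2"] Suc.prems
      using sweep_even[of u b "j + 1"] by (simp add: algebra_simps)
    then show ?thesis
      using odd_step(2)[of j] Suc.prems unfolding t by simp
  qed
qed (simp add: sweep_def)

end

lemma sweep_localises: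
  assumes conn: "connected_graph V E" and uV: "range u \<subseteq> V"
  defines "c1 \<equiv> sweep u (\<lambda>_. True) 1" and "c2 \<equiv> sweep u (\<lambda>_. True) 2"
    and "f \<equiv> \<lambda>h. sweep u (\<lambda>j. h ! (j - 2)) (length h + 2)"
  assumes w: "w \<in> possible_set V E c1 c2 f m (2 * j + 1)"
  shows "\<exists>v\<in>V. \<forall>i\<le>j. gdist E (cat E c1 c2 f m (2 * j + 1)) w \<le> gdist E (u (i + 1)) v + 2 * j"
proof -
  let ?b = "answer E c1 c2 f m" and ?T = "2 * j + 1"
  have cat: "cat E c1 c2 f m t = sweep u ?b t" if "1 \<le> t" for t
    unfolding c1_def c2_def f_def using sweep_causal that by (rule cat_causal_strategy)
  obtain mt where mt: "mt ?T = w" "\<forall>t\<in>{1..?T}. mt t \<in> V"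
      "\<forall>t\<in>{2..?T}. mt t = mt (t - 1) \<or> E (mt (t - 1)) (mt t)"
      "\<forall>t\<in>{2..?T}. (gdist E (cat E c1 c2 f m t) (mt t)
          \<le> gdist E (cat E c1 c2 f m (t - 1)) (mt (t - 1))) \<longleftrightarrow> ?b t"
    using w unfolding possible_set_def by blast
  interpret sweep_trajectory "gdist E" u ?b mt ?T
  proof
    fix x t
    assume "x \<in> range u" and t: "2 \<le> t" "t \<le> ?T"
    moreover have "t - 1 \<in> {1..?T}"
      using t by auto
    ultimately show "gdist E x (mt t) \<le> gdist E x (mt (t - 1)) + 1"
      using mt(2,3) uV by (intro gdist_move_le[OF conn]) auto
  next
    fix t
    assume t: "2 \<le> t" "t \<le> ?T"
    then have "cat E c1 c2 f m t = sweep u ?b t" and "cat E c1 c2 f m (t - 1) = sweep u ?b (t - 1)"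
      using cat by auto
    with t show "?b t \<longleftrightarrow> gdist E (sweep u ?b t) (mt t) \<le> gdist E (sweep u ?b (t - 1)) (mt (t - 1))"
      using bspec[OF mt(4), of t] by simp
  qed
  show ?thesis
    using tracks_centre mt(1,2) cat[of ?T] by (intro bexI[of _ "mt 1"]) auto
qed

lemma can_localise_sweep:
  assumes conn: "connected_graph V E" and uV: "range u \<subseteq> V"
    and cover: "\<forall>v\<in>V. \<exists>i\<le>j. gdist E (u (i + 1)) v \<le> k"
  shows "can_localise V E (k + 2 * j) (2 * j + 1)"
proof -
  let ?c1 = "sweep u (\<lambda>_. True) 1" and ?c2 = "sweep u (\<lambda>_. True) 2"
    and ?f = "\<lambda>h. sweep u (\<lambda>j. h ! (j - 2)) (length h + 2)"
  have in_V: "sweep u b t \<in> V" for b t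
    using sweep_in_range uV by (rule subsetD[rotated])
  have "grad V E (possible_set V E ?c1 ?c2 ?f m (2 * j + 1)) \<le> enat (k + 2 * j)" for m
  proof (rule grad_le)
    show "cat E ?c1 ?c2 ?f m (2 * j + 1) \<in> V"
      unfolding cat_def cat_pos_def using in_V by presburger
  next
    fix w
    assume "w \<in> possible_set V E ?c1 ?c2 ?f m (2 * j + 1)"
    then obtain v where "v \<in> V"
      and v: "\<forall>i\<le>j. gdist E (cat E ?c1 ?c2 ?f m (2 * j + 1)) w \<le> gdist E (u (i + 1)) v + 2 * j"
      using sweep_localises[OF conn uV] by blast
    moreover obtain i where "i \<le> j" and "gdist E (u (i + 1)) v \<le> k"
      using cover \<open>v \<in> V\<close> by blast
    ultimately show "gdist E (cat E ?c1 ?c2 ?f m (2 * j + 1)) w \<le> k + 2 * j"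
      by fastforce
  qed
  then show ?thesis
    unfolding can_localise_def using in_V
    by (intro exI[of _ ?c1] exI[of _ ?c2] exI[of _ ?f] conjI allI impI bexI[of _ "2 * j + 1"]) auto
qed

lemma can_localise_mono:
  assumes "can_localise V E d t" and "d \<le> d'" and "t \<le> t'"
  shows "can_localise V E d' t'"
proof -
  obtain c1 c2 f where strategy: "c1 \<in> V" "c2 \<in> V" "\<forall>h. f h \<in> V"
    and loc: "\<forall>m. mouse_seq V E m \<longrightarrow> (\<exists>i\<in>{1..t}. grad V E (possible_set V E c1 c2 f m i) \<le> enat d)"
    using assms(1) unfolding can_localise_def by blast
  have "\<exists>i\<in>{1..t'}. grad V E (possible_set V E c1 c2 f m i) \<le> enat d'" if m: "mouse_seq V E m" for m
  proof -
    obtain i where "i \<in> {1..t}" and "grad V E (possible_set V E c1 c2 f m i) \<le> enat d"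
      using loc m by blast
    then show ?thesis
      using assms(2,3) by (intro bexI[of _ i]) (auto elim: order_trans)
  qed
  then show ?thesis
    unfolding can_localise_def using strategy by blast
qed

theorem lemma4p2:
  fixes V :: "'a set" and E :: "'a \<Rightarrow> 'a \<Rightarrow> bool" and L k :: nat
  assumes "simple_graph V E"
    and "connected_graph V E"
    and "\<exists>u :: nat \<Rightarrow> 'a. (\<forall>j\<in>{1..L}. u j \<in> V) \<and>
           (\<forall>v\<in>V. \<exists>j\<in>{1..L}. gdist E (u j) v \<le> k)"
  shows "can_localise V E (4 * L + k) (2 * L)"
proof -
  obtain u where uV: "\<forall>j\<in>{1..L}. u j \<in> V" and cover: "\<forall>v\<in>V. \<exists>j\<in>{1..L}. gdist E (u j) v \<le> k"
    using assms(3) by blast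
  have "1 \<le> L"
    using assms(2) cover by (fastforce simp: connected_graph_def)
  define u' where "u' j = u (if j \<in> {1..L} then j else 1)" for j
  have "range u' \<subseteq> V"
    using uV \<open>1 \<le> L\<close> by (auto simp: u'_def)
  moreover have "\<forall>v\<in>V. \<exists>i\<le>L - 1. gdist E (u' (i + 1)) v \<le> k"
  proof
    fix v
    assume "v \<in> V"
    then obtain j where "j \<in> {1..L}" and "gdist E (u j) v \<le> k"
      using cover by blast
    then show "\<exists>i\<le>L - 1. gdist E (u' (i + 1)) v \<le> k"
      by (intro exI[of _ "j - 1"]) (auto simp: u'_def)
  qed
  ultimately have "can_localise V E (k + 2 * (L - 1)) (2 * (L - 1) + 1)"
    by (rule can_localise_sweep[OF assms(2)])
  then show ?thesis
    by (rule can_localise_mono) (use \<open>1 \<le> L\<close> in simp_all)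
qed

end
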